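(* Let $a,b$ be coprime integers with $0<a\le b$ and let $a/b=[0,u_1,\dots,u_n]$ be a simple continued fraction expansion of odd depth $n=2i+1$ ($i\ge 0$), with convergents $p_k/q_k$. Let $D$ be the standard line $\{(x,y)\in\mathbb{Z}^2: 0\le ax-by<a+b\}$, let $U_1=(0,0)$ and $U_2=(b,a)$ (consecutive upper leaning points of $D$), let $L_1$ be the lower leaning point of $D$ with $0<x\le b$, and $L_2=L_1+(b,a)$. Then \[ \overrightarrow{U_1L_1}=(u_{2i+1}-1)(q_{2i},p_{2i})+(q_{2i-1},p_{2i-1})+(1,-1),\qquad \overrightarrow{L_1U_2}=(q_{2i}-1,\;p_{2i}+1). \] Moreover, the Freeman word of the DSS $[U_1L_1]$ has $E(z_{2i})^{u_{2i+1}-1}$ as a left factor (prefix), and the Freeman word of the DSS $[L_1U_2]$ has $E(z_{2i-1})^{u_{2i}}$ as a right factor (suffix).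
   Context: A standard line $\{\mu\le ax-by<\mu+|a|+|b|\}$ is a 4-connected path of lattice points; points with $ax-by=\mu$ are upper leaning points, those with $ax-by=\mu+|a|+|b|-1$ lower leaning points. For two points $P,Q$ of $D$, $[PQ]$ denotes the path of points of $D$ from $P$ to $Q$, and its Freeman word records its unit moves, with $0$ denoting the step $(1,0)$ and $1$ the step $(0,1)$. For $a/b=[0,u_1,\dots,u_n]$, the $k$-th convergent is $z_k=p_k/q_k=[0,u_1,\dots,u_k]$, with $(p_0,q_0)=(0,1)$, $(p_{-1},q_{-1})=(1,0)$, $u_0=0$ and $(p_k,q_k)=u_k(p_{k-1},q_{k-1})+(p_{k-2},q_{k-2})$. The words $E(z_k)$ are defined by $E(z_{-1})=1$, $E(z_0)=0$, $E(z_1)=0^{u_1}1$, $E(z_{2j+1})=E(z_{2j})^{u_{2j+1}}E(z_{2j-1})$ and $E(z_{2j})=E(z_{2j-2})E(z_{2j-1})^{u_{2j}}$; $E(z_n)$ is the pattern of slope $a/b$ (the Freeman word between consecutive upper leaning points). *)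

theory Defs
  imports Complex_Main
begin

fun cf_value :: "real list \<Rightarrow> real" where
  "cf_value [] = 0"
| "cf_value [x] = x"
| "cf_value (x # y # ys) = x + 1 / cf_value (y # ys)"

text \<open>Convergent numerators/denominators with shifted index: cf_pp u (k+1) = p_k, cf_qq u (k+1) = q_k.\<close>
fun cf_pp :: "(nat \<Rightarrow> nat) \<Rightarrow> nat \<Rightarrow> int" where
  "cf_pp u 0 = 1"
| "cf_pp u (Suc 0) = 0"
| "cf_pp u (Suc (Suc m)) = int (u (Suc m)) * cf_pp u (Suc m) + cf_pp u m"

fun cf_qq :: "(nat \<Rightarrow> nat) \<Rightarrow> nat \<Rightarrow> int" where
  "cf_qq u 0 = 0"
| "cf_qq u (Suc 0) = 1"
| "cf_qq u (Suc (Suc m)) = int (u (Suc m)) * cf_qq u (Suc m) + cf_qq u m"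

definition cf_p :: "(nat \<Rightarrow> nat) \<Rightarrow> int \<Rightarrow> int" where
  "cf_p u k = cf_pp u (nat (k + 1))"

definition cf_q :: "(nat \<Rightarrow> nat) \<Rightarrow> int \<Rightarrow> int" where
  "cf_q u k = cf_qq u (nat (k + 1))"

text \<open>Words E(z_k) with shifted index: cf_EE u (k+1) = E(z_k). Letters 0 and 1 are naturals.\<close>
fun cf_EE :: "(nat \<Rightarrow> nat) \<Rightarrow> nat \<Rightarrow> nat list" where
  "cf_EE u 0 = [1]"
| "cf_EE u (Suc 0) = [0]"
| "cf_EE u (Suc (Suc 0)) = replicate (u 1) 0 @ [1]"
| "cf_EE u (Suc (Suc (Suc m))) =
     (if odd (Suc (Suc m))
      then concat (replicate (u (Suc (Suc m))) (cf_EE u (Suc (Suc m)))) @ cf_EE u (Suc m)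
      else cf_EE u (Suc m) @ concat (replicate (u (Suc (Suc m))) (cf_EE u (Suc (Suc m)))))"

definition cf_E :: "(nat \<Rightarrow> nat) \<Rightarrow> int \<Rightarrow> nat list" where
  "cf_E u k = cf_EE u (nat (k + 1))"

definition standard_line :: "int \<Rightarrow> int \<Rightarrow> int \<Rightarrow> (int \<times> int) set" where
  "standard_line a b \<mu> = {(x, y). \<mu> \<le> a * x - b * y \<and> a * x - b * y < \<mu> + \<bar>a\<bar> + \<bar>b\<bar>}"

definition freeman_step :: "nat \<Rightarrow> int \<times> int" where
  "freeman_step c = (if c = 0 then (1, 0) else (0, 1))"

fun freeman_walk :: "int \<times> int \<Rightarrow> nat list \<Rightarrow> (int \<times> int) list" where
  "freeman_walk P [] = [P]"
| "freeman_walk P (c # w) = P # freeman_walk (fst P + fst (freeman_step c), snd P + snd (freeman_step c)) w"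

definition freeman_word :: "(int \<times> int) set \<Rightarrow> int \<times> int \<Rightarrow> int \<times> int \<Rightarrow> nat list" where
  "freeman_word D P Q = (THE w. set w \<subseteq> {0, 1} \<and> set (freeman_walk P w) \<subseteq> D
                              \<and> last (freeman_walk P w) = Q)"

end

theory Submission
  imports Defs "HOL-Library.Sublist"
begin

text \<open>Each word \<open>E(z_k)\<close> is the pattern of slope \<open>p_k/q_k\<close>: gluing the patterns of two slopes
  \<open>p/q\<close> and \<open>p'/q'\<close> with \<open>q p' - p q' = 1\<close> gives the pattern of the mediant slope.
  Since \<open>a/b = p_{2i+1}/q_{2i+1}\<close> in lowest terms, \<open>E(z_{2i+1}) = E(z_{2i})^{u_{2i+1}} E(z_{2i-1})\<close> is the pattern of \<open>D\<close>, and from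
  \<open>a q_{2i} - b p_{2i} = 1\<close> the lower leaning point is \<open>L_1 = (b, a) - (q_{2i}, p_{2i}) + (1, -1)\<close>.
  On the path of the pattern \<open>L_1\<close> is reached after \<open>E(z_{2i})^{u_{2i+1} - 1}\<close> and the first
  \<open>|E(z_{2i-1})|\<close> letters of \<open>E(z_{2i}) E(z_{2i-1})\<close>; the remaining letters end with
  \<open>E(z_{2i-1})^{u_{2i}}\<close>, which is a suffix of \<open>E(z_{2i})\<close> and commutes with \<open>E(z_{2i-1})\<close>.\<close>

subsection \<open>Letter counts and Freeman walks\<close>

definition zeros :: "nat list \<Rightarrow> int" where
  "zeros w = int (length (filter (\<lambda>c. c = 0) w))"

definition ones :: "nat list \<Rightarrow> int" where
  "ones w = int (length (filter (\<lambda>c. c \<noteq> 0) w))"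

lemma zeros_simps [simp]:
  "zeros [] = 0" "zeros (c # w) = (if c = 0 then 1 else 0) + zeros w" "zeros (v @ w) = zeros v + zeros w"
  by (auto simp: zeros_def)

lemma ones_simps [simp]:
  "ones [] = 0" "ones (c # w) = (if c = 0 then 0 else 1) + ones w" "ones (v @ w) = ones v + ones w"
  by (auto simp: ones_def)

lemma zeros_nonneg [simp]: "0 \<le> zeros w" and ones_nonneg [simp]: "0 \<le> ones w"
  by (auto simp: zeros_def ones_def)

lemma length_eq_zeros_plus_ones: "int (length w) = zeros w + ones w"
  by (induction w) auto

lemma freeman_step_simps [simp]:
  "fst (freeman_step c) = (if c = 0 then 1 else 0)" "snd (freeman_step c) = (if c = 0 then 0 else 1)"
  by (auto simp: freeman_step_def)

lemma length_freeman_walk [simp]: "length (freeman_walk P w) = Suc (length w)"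
  by (induction w arbitrary: P) auto

lemma nth_freeman_walk:
  "j \<le> length w \<Longrightarrow> freeman_walk P w ! j = (fst P + zeros (take j w), snd P + ones (take j w))"
proof (induction w arbitrary: P j)
  case (Cons c w)
  then show ?case by (cases j) auto
qed simp

lemma freeman_walk_not_Nil [simp]: "freeman_walk P w \<noteq> []"
  by (cases w) auto

lemma start_mem_freeman_walk: "P \<in> set (freeman_walk P w)"
  by (cases w) auto

lemma last_freeman_walk: "last (freeman_walk P w) = (fst P + zeros w, snd P + ones w)"
  by (simp add: last_conv_nth nth_freeman_walk)

lemma set_freeman_walk:
  "set (freeman_walk P w) = {(fst P + zeros (take j w), snd P + ones (take j w)) | j. j \<le> length w}"
proof -
  have "set (freeman_walk P w) = (\<lambda>j. freeman_walk P w ! j) ` {..length w}"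
    by (auto simp: set_conv_nth less_Suc_eq_le)
  then show ?thesis by (auto simp: nth_freeman_walk)
qed

lemma freeman_walk_append:
  "freeman_walk P (v @ w) = butlast (freeman_walk P v) @ freeman_walk (last (freeman_walk P v)) w"
  by (induction v arbitrary: P) auto

lemma mem_standard_line_0:
  "0 \<le> a \<Longrightarrow> 0 \<le> b \<Longrightarrow> (x, y) \<in> standard_line a b 0 \<longleftrightarrow> 0 \<le> a * x - b * y \<and> a * x - b * y < a + b"
  by (simp add: standard_line_def)

lemma standard_line_antidiagonal_unique:
  assumes "0 \<le> a" "0 \<le> b" "(x1, y1) \<in> standard_line a b 0" "(x2, y2) \<in> standard_line a b 0"
    and "x1 + y1 = x2 + y2"
  shows "(x1, y1) = (x2, y2)"
proof -
  have "(a * x1 - b * y1) - (a * x2 - b * y2) = (a + b) * (x1 - x2)"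
  proof -
    have "(a * x1 - b * y1) - (a * x2 - b * y2) = (a + b) * (x1 - x2) - b * ((x1 + y1) - (x2 + y2))"
      by (simp add: algebra_simps)
    then show ?thesis using assms(5) by simp
  qed
  moreover have "\<bar>(a * x1 - b * y1) - (a * x2 - b * y2)\<bar> < a + b"
    using assms(1-4) by (auto simp: mem_standard_line_0)
  ultimately have "(a + b) * \<bar>x1 - x2\<bar> < (a + b) * 1"
    using assms(1,2) by (simp add: abs_mult)
  then have "\<bar>x1 - x2\<bar> < 1"
    using assms(1,2) mult_left_mono[of 1 "\<bar>x1 - x2\<bar>" "a + b"] by linarith
  then show ?thesis using assms(5) by auto
qed

lemma standard_line_not_both_steps:
  "0 \<le> a \<Longrightarrow> 0 \<le> b \<Longrightarrow> (x + 1, y) \<in> standard_line a b 0 \<Longrightarrow> (x, y + 1) \<notin> standard_line a b 0"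
  by (simp add: mem_standard_line_0 algebra_simps)

lemma freeman_walk_in_standard_line_unique:
  assumes "0 \<le> a" "0 \<le> b"
    and "set w1 \<subseteq> {0, 1}" "set w2 \<subseteq> {0, 1}"
    and "set (freeman_walk P w1) \<subseteq> standard_line a b 0" "set (freeman_walk P w2) \<subseteq> standard_line a b 0"
    and "last (freeman_walk P w1) = last (freeman_walk P w2)"
  shows "w1 = w2"
  using assms(3-)
proof (induction w1 arbitrary: P w2)
  case Nil
  then have "zeros w2 = 0 \<and> ones w2 = 0" unfolding last_freeman_walk by (cases P) simp
  then show ?case using length_eq_zeros_plus_ones[of w2] by simp
next
  case (Cons c w1)
  then have "zeros (c # w1) = zeros w2 \<and> ones (c # w1) = ones w2"
    unfolding last_freeman_walk by (cases P) simp
  then have "length w2 = length (c # w1)" using length_eq_zeros_plus_ones by (metis of_nat_eq_iff)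
  then obtain d w2' where w2: "w2 = d # w2'" by (cases w2) auto
  define step where "step e = (fst P + fst (freeman_step e), snd P + snd (freeman_step e))" for e
  have "step c \<in> standard_line a b 0" "step d \<in> standard_line a b 0"
    using Cons.prems(3,4) w2 start_mem_freeman_walk[of "step c" w1] start_mem_freeman_walk[of "step d" w2']
    by (auto simp: step_def)
  moreover have "c \<in> {0, 1}" "d \<in> {0, 1}" using Cons.prems(1,2) w2 by auto
  ultimately have "c = d"
    using standard_line_not_both_steps[OF assms(1,2), of "fst P" "snd P"] by (auto simp: step_def)
  moreover have "w1 = w2'"
    using Cons.IH[of w2' "step c"] Cons.prems w2 \<open>c = d\<close> by (simp add: step_def)
  ultimately show ?case using w2 by simp
qed

lemma freeman_word_eqI:
  assumes "0 \<le> a" "0 \<le> b" "set w \<subseteq> {0, 1}" "set (freeman_walk P w) \<subseteq> standard_line a b 0"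
    and "last (freeman_walk P w) = Q"
  shows "freeman_word (standard_line a b 0) P Q = w"
  unfolding freeman_word_def
  using assms freeman_walk_in_standard_line_unique[OF assms(1,2)] by (intro the_equality) blast+

subsection \<open>Patterns\<close>

definition walk_remainder :: "int \<Rightarrow> int \<Rightarrow> nat list \<Rightarrow> int" where
  "walk_remainder p q w = p * zeros w - q * ones w"

text \<open>\<open>is_pattern p q W\<close>: the walk of \<open>W\<close> leads from the origin to \<open>(q, p)\<close> through points of
  \<open>standard_line p q 0\<close>; for coprime \<open>p, q\<close> this makes \<open>W\<close> the pattern of slope \<open>p/q\<close>.\<close>

definition is_pattern :: "int \<Rightarrow> int \<Rightarrow> nat list \<Rightarrow> bool" where
  "is_pattern p q W \<longleftrightarrow> zeros W = q \<and> ones W = p \<and>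
     (\<forall>j \<le> length W. 0 \<le> walk_remainder p q (take j W) \<and> walk_remainder p q (take j W) < p + q)"

lemma is_pattern_nonneg: "is_pattern p q W \<Longrightarrow> 0 \<le> p \<and> 0 \<le> q"
  by (metis is_pattern_def zeros_nonneg ones_nonneg)

lemma bounds_from_scaled_eq:
  fixes s S h h' c :: int
  assumes "s * h = S * h' + c" "0 \<le> h'" "h' < s" "0 \<le> c" "c \<le> s" "s < S"
  shows "0 \<le> h \<and> h < S"
proof -
  have "S * h' \<le> S * (s - 1)" using assms by (intro mult_left_mono) auto
  then have "s * h < s * S" using assms by (simp add: algebra_simps)
  moreover have "0 \<le> s * h" using assms by simp
  ultimately show ?thesis using assms(2,3) by (simp add: zero_le_mult_iff)
qed

text \<open>For a prefix \<open>t\<close> of \<open>W1\<close>, \<open>(p1 + q1) r(t) = (P + Q) r1(t) + |t|\<close>, where \<open>r, r1\<close> are the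
  remainders for the slopes \<open>P/Q = (p1 + p2)/(q1 + q2)\<close> and \<open>p1/q1\<close>; prefixes running into \<open>W2\<close>
  behave symmetrically. So the bounds on \<open>r1\<close> (and \<open>r2\<close>) transfer to \<open>r\<close>.\<close>

lemma is_pattern_append:
  assumes W1: "is_pattern p1 q1 W1" and W2: "is_pattern p2 q2 W2" and det: "q1 * p2 - p1 * q2 = 1"
  shows "is_pattern (p1 + p2) (q1 + q2) (W1 @ W2)"
proof -
  define P Q where "P = p1 + p2" and "Q = q1 + q2"
  have counts: "zeros W1 = q1" "ones W1 = p1" "zeros W2 = q2" "ones W2 = p2"
    using W1 W2 by (auto simp: is_pattern_def)
  have nonneg: "0 \<le> p1" "0 \<le> q1" "0 \<le> p2" "0 \<le> q2"
    using is_pattern_nonneg[OF W1] is_pattern_nonneg[OF W2] by simp_all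
  have "0 < q1 * p2" using det nonneg by (smt (verit) mult_nonneg_nonneg)
  then have pos: "0 < p1 + q1" "0 < p2 + q2" using nonneg by (auto simp: zero_less_mult_iff)
  have len: "int (length W1) = p1 + q1" "int (length W2) = p2 + q2"
    using counts length_eq_zeros_plus_ones by auto
  have "0 \<le> walk_remainder P Q (take j (W1 @ W2)) \<and> walk_remainder P Q (take j (W1 @ W2)) < P + Q"
    if "j \<le> length (W1 @ W2)" for j
  proof (cases "j \<le> length W1")
    case True
    define t where "t = take j W1"
    have prefix: "take j (W1 @ W2) = t" using True by (simp add: t_def)
    have "(p1 + q1) * walk_remainder P Q t
        = (P + Q) * walk_remainder p1 q1 t + (zeros t + ones t) * (q1 * p2 - p1 * q2)"
      unfolding walk_remainder_def P_def Q_def by algebra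
    then have eq: "(p1 + q1) * walk_remainder P Q t = (P + Q) * walk_remainder p1 q1 t + (zeros t + ones t)"
      using det by simp
    moreover have "0 \<le> walk_remainder p1 q1 t" "walk_remainder p1 q1 t < p1 + q1"
      using W1 True by (auto simp: is_pattern_def t_def)
    moreover have "zeros t + ones t \<le> p1 + q1"
      using length_eq_zeros_plus_ones[of t] len True by (simp add: t_def)
    ultimately show ?thesis
      unfolding prefix using pos zeros_nonneg[of t] ones_nonneg[of t]
      by (intro bounds_from_scaled_eq[OF eq]) (simp_all add: P_def Q_def del: zeros_nonneg ones_nonneg)
  next
    case False
    define t where "t = take (j - length W1) W2"
    have prefix: "take j (W1 @ W2) = W1 @ t" using False by (simp add: t_def)
    have "(p2 + q2) * walk_remainder P Q (W1 @ t)
        = (P + Q) * walk_remainder p2 q2 t + (p2 + q2 - (zeros t + ones t)) * (q1 * p2 - p1 * q2)"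
      unfolding walk_remainder_def P_def Q_def by (simp add: counts) algebra
    then have eq: "(p2 + q2) * walk_remainder P Q (W1 @ t)
        = (P + Q) * walk_remainder p2 q2 t + (p2 + q2 - (zeros t + ones t))"
      using det by simp
    moreover have "0 \<le> walk_remainder p2 q2 t" "walk_remainder p2 q2 t < p2 + q2"
      using W2 that by (auto simp: is_pattern_def t_def)
    moreover have "zeros t + ones t \<le> p2 + q2"
      using length_eq_zeros_plus_ones[of t] len by (simp add: t_def)
    ultimately show ?thesis
      unfolding prefix using pos zeros_nonneg[of t] ones_nonneg[of t]
      by (intro bounds_from_scaled_eq[OF eq]) (simp_all add: P_def Q_def del: zeros_nonneg ones_nonneg)
  qed
  then show ?thesis using counts by (simp add: is_pattern_def P_def Q_def)
qed

lemma is_pattern_replicate_append: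
  assumes "is_pattern p q E" "is_pattern p' q' X" "q * p' - p * q' = 1"
  shows "is_pattern (int m * p + p') (int m * q + q') (concat (replicate m E) @ X)"
proof (induction m)
  case (Suc m)
  have "q * (int m * p + p') - p * (int m * q + q') = 1" using assms(3) by (simp add: algebra_simps)
  from is_pattern_append[OF assms(1) Suc this] show ?case by (simp add: algebra_simps)
qed (use assms(2) in simp)

lemma is_pattern_append_replicate:
  assumes "is_pattern p q E" "is_pattern p' q' X" "q' * p - p' * q = 1"
  shows "is_pattern (p' + int m * p) (q' + int m * q) (X @ concat (replicate m E))"
proof (induction m)
  case (Suc m)
  have "(q' + int m * q) * p - (p' + int m * p) * q = 1" using assms(3) by (simp add: algebra_simps)
  from is_pattern_append[OF Suc assms(1) this]
  show ?case by (simp add: algebra_simps replicate_append_same[symmetric])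
qed (use assms(2) in simp)

lemma freeman_walk_pattern_in_standard_line:
  assumes "is_pattern a b W"
  shows "set (freeman_walk (0, 0) W) \<subseteq> standard_line a b 0"
  using assms is_pattern_nonneg[OF assms]
  by (auto simp: set_freeman_walk is_pattern_def walk_remainder_def mem_standard_line_0)

lemma freeman_words_of_pattern_split:
  assumes W: "is_pattern a b W" "set W \<subseteq> {0, 1}" and N: "N \<le> length W"
    and L: "L \<in> standard_line a b 0" "fst L + snd L = int N"
  shows "freeman_word (standard_line a b 0) (0, 0) L = take N W"
    and "freeman_word (standard_line a b 0) L (b, a) = drop N W"
proof -
  have ab: "0 \<le> a" "0 \<le> b" using is_pattern_nonneg[OF W(1)] by simp_all
  define T where "T = last (freeman_walk (0, 0) (take N W))"
  have walk: "freeman_walk (0, 0) W = butlast (freeman_walk (0, 0) (take N W)) @ freeman_walk T (drop N W)"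
    using freeman_walk_append[of "(0, 0)" "take N W" "drop N W"] by (simp add: T_def)
  have "butlast (freeman_walk (0, 0) (take N W)) @ [T] = freeman_walk (0, 0) (take N W)"
    by (simp add: T_def)
  from arg_cong[where f = set, OF this]
  have "set (freeman_walk (0, 0) (take N W)) = insert T (set (butlast (freeman_walk (0, 0) (take N W))))"
    by simp
  also have "\<dots> \<subseteq> set (freeman_walk (0, 0) W)"
    using walk start_mem_freeman_walk[of T "drop N W"] by auto
  finally have prefix_in_D: "set (freeman_walk (0, 0) (take N W)) \<subseteq> standard_line a b 0"
    using freeman_walk_pattern_in_standard_line[OF W(1)] by (rule order_trans)
  have suffix_in_D: "set (freeman_walk T (drop N W)) \<subseteq> standard_line a b 0"
    using walk freeman_walk_pattern_in_standard_line[OF W(1)] by auto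
  have "T \<in> standard_line a b 0" using suffix_in_D start_mem_freeman_walk by blast
  moreover have "fst T + snd T = int N"
    using length_eq_zeros_plus_ones[of "take N W"] N by (simp add: T_def last_freeman_walk)
  ultimately have "T = L"
    using standard_line_antidiagonal_unique[OF ab] L by (metis surjective_pairing)
  have "last (freeman_walk T (drop N W)) = last (freeman_walk (0, 0) W)" by (simp add: walk)
  also have "\<dots> = (b, a)" using W(1) by (simp add: last_freeman_walk is_pattern_def)
  finally have "last (freeman_walk T (drop N W)) = (b, a)" .
  with \<open>T = L\<close> show "freeman_word (standard_line a b 0) L (b, a) = drop N W"
    using suffix_in_D W(2) set_drop_subset[of N W] by (intro freeman_word_eqI[OF ab]) auto
  show "freeman_word (standard_line a b 0) (0, 0) L = take N W"
    using prefix_in_D W(2) set_take_subset[of N W] \<open>T = L\<close> T_def by (intro freeman_word_eqI[OF ab]) auto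
qed

subsection \<open>Convergents and the words \<open>E(z_k)\<close>\<close>

lemma cf_qq_nonneg: "0 \<le> cf_qq u k"
  by (induction u k rule: cf_qq.induct) auto

lemma cf_qq_ge_1:
  assumes "\<And>k. 1 \<le> k \<Longrightarrow> k \<le> m \<Longrightarrow> 1 \<le> u k"
  shows "1 \<le> cf_qq u (Suc m)"
  using assms
proof (induction m)
  case (Suc m)
  have "1 \<le> cf_qq u (Suc m)" "1 \<le> u (Suc m)" using Suc by simp_all
  then have "1 \<le> int (u (Suc m)) * cf_qq u (Suc m)"
    using mult_mono[of 1 "int (u (Suc m))" 1 "cf_qq u (Suc m)"] by simp
  then show ?case using cf_qq_nonneg[of u m] by simp
qed simp

lemma cf_convergents_det:
  "cf_pp u (Suc k) * cf_qq u k - cf_pp u k * cf_qq u (Suc k) = (-1) ^ Suc k"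
proof (induction k)
  case (Suc k)
  have "cf_pp u (Suc (Suc k)) * cf_qq u (Suc k) - cf_pp u (Suc k) * cf_qq u (Suc (Suc k))
      = - (cf_pp u (Suc k) * cf_qq u k - cf_pp u k * cf_qq u (Suc k))"
    by (simp add: algebra_simps)
  then show ?case using Suc by simp
qed simp

lemma cf_p_of_nat: "cf_p u (int k) = cf_pp u (Suc k)" and cf_p_of_nat_minus_1: "cf_p u (int k - 1) = cf_pp u k"
  and cf_q_of_nat: "cf_q u (int k) = cf_qq u (Suc k)" and cf_q_of_nat_minus_1: "cf_q u (int k - 1) = cf_qq u k"
  and cf_E_of_nat: "cf_E u (int k) = cf_EE u (Suc k)" and cf_E_of_nat_minus_1: "cf_E u (int k - 1) = cf_EE u k"
  by (simp_all add: cf_p_def cf_q_def cf_E_def nat_add_distrib)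

lemma is_pattern_cf_EE: "is_pattern (cf_pp u k) (cf_qq u k) (cf_EE u k)"
proof (induction u k rule: cf_EE.induct)
  case (1 u)
  show ?case by (simp add: is_pattern_def walk_remainder_def le_Suc_eq)
next
  case (2 u)
  show ?case by (simp add: is_pattern_def walk_remainder_def le_Suc_eq)
next
  case (3 u)
  have "is_pattern 0 1 [0]" "is_pattern 1 0 [1]" by (simp_all add: is_pattern_def walk_remainder_def le_Suc_eq)
  from is_pattern_replicate_append[OF this, of "u 1"]
  show ?case by (simp add: replicate_append_same)
next
  case (4 u m)
  have det: "cf_pp u (Suc (Suc m)) * cf_qq u (Suc m) - cf_pp u (Suc m) * cf_qq u (Suc (Suc m))
      = (-1) ^ m"
    using cf_convergents_det[of u "Suc m"] by simp
  show ?case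
  proof (cases "odd (Suc (Suc m))")
    case True
    then have "(-1::int) ^ m = -1" by simp
    with True 4 is_pattern_replicate_append[of "cf_pp u (Suc (Suc m))" "cf_qq u (Suc (Suc m))" _
        "cf_pp u (Suc m)" "cf_qq u (Suc m)" _ "u (Suc (Suc m))"] det
    show ?thesis by (simp add: algebra_simps)
  next
    case False
    then have "(-1::int) ^ m = 1" by simp
    with False 4 is_pattern_append_replicate[of "cf_pp u (Suc (Suc m))" "cf_qq u (Suc (Suc m))" _
        "cf_pp u (Suc m)" "cf_qq u (Suc m)" _ "u (Suc (Suc m))"] det
    show ?thesis by (simp add: algebra_simps)
  qed
qed

lemma set_cf_EE: "set (cf_EE u k) \<subseteq> {0, 1}"
  by (induction u k rule: cf_EE.induct) auto

lemma length_cf_EE: "int (length (cf_EE u k)) = cf_pp u k + cf_qq u k"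
  using is_pattern_cf_EE[of u k] length_eq_zeros_plus_ones[of "cf_EE u k"] by (simp add: is_pattern_def)

lemma cf_value_snoc_snoc: "cf_value (xs @ [x, y]) = cf_value (xs @ [x + 1 / y])"
proof (induction xs)
  case (Cons z xs)
  then show ?case by (cases xs) auto
qed simp

lemma cf_value_snoc_convergents:
  assumes "u 0 = 0" "0 < y"
  shows "cf_value (map (\<lambda>k. real (u k)) [0..<Suc m] @ [y])
    = (y * cf_pp u (Suc m) + cf_pp u m) / (y * cf_qq u (Suc m) + cf_qq u m)"
  using assms(2)
proof (induction m arbitrary: y)
  case (Suc m)
  define y' where "y' = real (u (Suc m)) + 1 / y"
  have "0 < y'" using Suc.prems by (simp add: y'_def add_nonneg_pos)
  have "map (\<lambda>k. real (u k)) [0..<Suc (Suc m)] @ [y] = map (\<lambda>k. real (u k)) [0..<Suc m] @ [real (u (Suc m)), y]"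
    by simp
  then have "cf_value (map (\<lambda>k. real (u k)) [0..<Suc (Suc m)] @ [y])
      = (y' * cf_pp u (Suc m) + cf_pp u m) / (y' * cf_qq u (Suc m) + cf_qq u m)"
    using Suc.IH[OF \<open>0 < y'\<close>] by (simp only: cf_value_snoc_snoc y'_def)
  also have "\<dots> = (y * (y' * cf_pp u (Suc m) + cf_pp u m)) / (y * (y' * cf_qq u (Suc m) + cf_qq u m))"
    using Suc.prems by simp
  also have "\<dots> = (y * cf_pp u (Suc (Suc m)) + cf_pp u (Suc m)) / (y * cf_qq u (Suc (Suc m)) + cf_qq u (Suc m))"
    using Suc.prems by (simp add: y'_def algebra_simps)
  finally show ?case .
qed (simp add: assms(1))

lemma coprime_cf_convergents: "coprime (cf_pp u (Suc k)) (cf_qq u (Suc k))"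
proof (rule coprimeI)
  fix c assume "c dvd cf_pp u (Suc k)" "c dvd cf_qq u (Suc k)"
  then have "c dvd cf_pp u (Suc k) * cf_qq u k - cf_pp u k * cf_qq u (Suc k)" by simp
  then have "c dvd (-1) ^ Suc k" unfolding cf_convergents_det .
  then show "is_unit c" by (rule dvd_unit_imp_unit) simp
qed

lemma coprime_cross_mult_eq:
  fixes a b c d :: int
  assumes "coprime a b" "coprime c d" "0 < a" "0 < c" "a * d = b * c"
  shows "a = c \<and> b = d"
proof -
  have "a dvd c" using assms(1,5) by (metis coprime_dvd_mult_right_iff dvd_triv_left)
  moreover have "c dvd a" using assms(2,5) by (metis coprime_dvd_mult_right_iff dvd_triv_right mult.commute)
  ultimately have "a = c" using assms(3,4) by (simp add: zdvd_antisym_nonneg)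
  then show ?thesis using assms(3,5) by simp
qed

lemma reduced_fraction_eq_convergent:
  fixes a b :: int
  assumes "coprime a b" "0 < a" "0 < b" "u 0 = 0" "0 < u (Suc m)"
    and "a / b = cf_value (map (\<lambda>k. real (u k)) [0..<Suc (Suc m)])"
  shows "a = cf_pp u (Suc (Suc m)) \<and> b = cf_qq u (Suc (Suc m))"
proof -
  define P Q where "P = cf_pp u (Suc (Suc m))" and "Q = cf_qq u (Suc (Suc m))"
  have "map (\<lambda>k. real (u k)) [0..<Suc (Suc m)] = map (\<lambda>k. real (u k)) [0..<Suc m] @ [real (u (Suc m))]"
    by simp
  with assms(6) have "a / b = P / Q"
    using cf_value_snoc_convergents[of u "real (u (Suc m))" m, OF assms(4)] assms(5)
    by (simp add: P_def Q_def)
  moreover from this have "Q \<noteq> 0" using assms(2,3) by auto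
  ultimately have "a * Q = b * P" using assms(3) by (simp add: field_simps flip: of_int_mult)
  moreover have "0 < Q" using \<open>Q \<noteq> 0\<close> cf_qq_nonneg[of u] by (simp add: Q_def order_less_le)
  ultimately have "0 < b * P" using assms(2) by (metis mult_pos_pos)
  then have "0 < P" using assms(3) zero_less_mult_pos by blast
  with \<open>a * Q = b * P\<close> have "a = P \<and> b = Q"
    using coprime_cross_mult_eq[OF assms(1) coprime_cf_convergents[of u "Suc m"], folded P_def Q_def] assms(2)
    by blast
  then show ?thesis unfolding P_def Q_def .
qed

text \<open>By coprimality at most one point with \<open>0 < x \<le> b\<close> has remainder \<open>a + b - 1\<close>, and
  \<open>(b, a) - (q, p) + (1, -1)\<close> is one.\<close>

lemma lower_leaning_point_eq:
  fixes a b p q x y :: int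
  assumes "coprime a b" "a * q - b * p = 1" "1 \<le> q" "q \<le> b"
    and "a * x - b * y = a + b - 1" "0 < x" "x \<le> b"
  shows "(x, y) = (b - q + 1, a - p - 1)"
proof -
  define x' y' where "x' = b - q + 1" and "y' = a - p - 1"
  have "a * (x - x') = b * (y - y')"
    using assms(2,5) by (simp add: x'_def y'_def algebra_simps)
  then have "b dvd a * (x - x')" by (metis dvd_triv_left)
  then have "b dvd x - x'" using assms(1) by (simp add: coprime_commute coprime_dvd_mult_right_iff)
  moreover have "\<bar>x - x'\<bar> < b" using assms(3,4,6,7) by (simp add: x'_def)
  ultimately have "x = x'"
    using dvd_imp_le_int[of "x - x'" b] by (cases "x = x'") auto
  with \<open>a * (x - x') = b * (y - y')\<close> have "y = y'" using assms(3,4) by simp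
  with \<open>x = x'\<close> show ?thesis by (simp add: x'_def y'_def)
qed

subsection \<open>Splitting the pattern at the lower leaning point\<close>

lemma cf_EE_Suc_Suc_of_even:
  assumes "even m"
  shows "cf_EE u (Suc (Suc m)) = concat (replicate (u (Suc m)) (cf_EE u (Suc m))) @ cf_EE u m"
proof (cases m)
  case (Suc k)
  with assms show ?thesis by simp
qed (simp add: concat_replicate_single)

lemma suffix_cf_EE_Suc_of_even:
  assumes "u 0 = 0" "even m"
  shows "suffix (concat (replicate (u m) (cf_EE u m))) (cf_EE u (Suc m))"
proof (cases m)
  case (Suc k)
  with assms(2) obtain j where "m = Suc (Suc j)" by (cases k) auto
  with assms(2) show ?thesis by (simp add: suffix_def)
qed (simp add: assms(1))

lemma concat_replicate_append_self: "concat (replicate k w) @ w = w @ concat (replicate k w)"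
  by (induction k) auto

lemma cf_EE_split_at_lower_leaning_point:
  assumes "even m" "u 0 = 0" "1 \<le> u (Suc m)"
  defines "N \<equiv> (u (Suc m) - 1) * length (cf_EE u (Suc m)) + length (cf_EE u m)"
  shows "prefix (concat (replicate (u (Suc m) - 1) (cf_EE u (Suc m)))) (take N (cf_EE u (Suc (Suc m))))"
    and "suffix (concat (replicate (u m) (cf_EE u m))) (drop N (cf_EE u (Suc (Suc m))))"
proof -
  define E E' X where "E = cf_EE u (Suc m)" and "E' = cf_EE u m"
    and "X = concat (replicate (u (Suc m) - 1) E)"
  obtain k where "u (Suc m) = Suc k" using assms(3) by (cases "u (Suc m)") auto
  then have "concat (replicate (u (Suc m)) E) = X @ E"
    by (simp add: X_def concat_replicate_append_self)
  then have W: "cf_EE u (Suc (Suc m)) = X @ E @ E'"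
    using cf_EE_Suc_Suc_of_even[OF assms(1)] by (simp add: E_def E'_def)
  have N: "N = length X + length E'"
    by (simp add: N_def X_def E_def E'_def length_concat sum_list_replicate)
  show "prefix (concat (replicate (u (Suc m) - 1) (cf_EE u (Suc m)))) (take N (cf_EE u (Suc (Suc m))))"
    unfolding W N by (simp add: X_def E_def)
  obtain S where S: "E = S @ concat (replicate (u m) E')"
    using suffix_cf_EE_Suc_of_even[of u m, OF assms(2,1)] by (auto simp: suffix_def E_def E'_def)
  then have "E @ E' = (S @ E') @ concat (replicate (u m) E')"
    by (simp add: concat_replicate_append_self)
  moreover have "length E' \<le> length (S @ E')" by simp
  ultimately show "suffix (concat (replicate (u m) (cf_EE u m))) (drop N (cf_EE u (Suc (Suc m))))"
    unfolding W N by (simp add: suffix_def E'_def)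
qed

lemma freeman_words_at_lower_leaning_point:
  assumes "even m" "u 0 = 0" "1 \<le> u (Suc m)"
    and W: "is_pattern a b (cf_EE u (Suc (Suc m)))"
    and L: "L \<in> standard_line a b 0"
      "fst L + snd L = (int (u (Suc m)) - 1) * (cf_pp u (Suc m) + cf_qq u (Suc m)) + cf_pp u m + cf_qq u m"
  shows "prefix (concat (replicate (u (Suc m) - 1) (cf_EE u (Suc m)))) (freeman_word (standard_line a b 0) (0, 0) L)"
    and "suffix (concat (replicate (u m) (cf_EE u m))) (freeman_word (standard_line a b 0) L (b, a))"
proof -
  define N where "N = (u (Suc m) - 1) * length (cf_EE u (Suc m)) + length (cf_EE u m)"
  have "fst L + snd L = int N"
    using L(2) assms(3) length_cf_EE[of u m] length_cf_EE[of u "Suc m"] by (simp add: N_def of_nat_diff)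
  moreover have "N \<le> length (cf_EE u (Suc (Suc m)))"
    using cf_EE_Suc_Suc_of_even[OF assms(1), of u] assms(3) by (simp add: N_def length_concat sum_list_replicate)
  ultimately have "freeman_word (standard_line a b 0) (0, 0) L = take N (cf_EE u (Suc (Suc m)))"
    "freeman_word (standard_line a b 0) L (b, a) = drop N (cf_EE u (Suc (Suc m)))"
    using freeman_words_of_pattern_split[OF W set_cf_EE _ L(1)] by auto
  then show "prefix (concat (replicate (u (Suc m) - 1) (cf_EE u (Suc m)))) (freeman_word (standard_line a b 0) (0, 0) L)"
    and "suffix (concat (replicate (u m) (cf_EE u m))) (freeman_word (standard_line a b 0) L (b, a))"
    using cf_EE_split_at_lower_leaning_point[OF assms(1-3)] by (simp_all add: N_def)
qed

theorem proposition1: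
  fixes a b :: int and u :: "nat \<Rightarrow> nat" and i :: nat and L1 L2 :: "int \<times> int"
  assumes "coprime a b" and "0 < a" and "a \<le> b"
    and "u 0 = 0"
    and "\<And>k. 1 \<le> k \<Longrightarrow> k \<le> 2 * i + 1 \<Longrightarrow> 1 \<le> u k"
    and "real_of_int a / real_of_int b = cf_value (map (\<lambda>k. real (u k)) [0..<2 * i + 2])"
    and "L1 \<in> standard_line a b 0"
    and "a * fst L1 - b * snd L1 = a + b - 1"
    and "0 < fst L1" and "fst L1 \<le> b"
    and "L2 = (fst L1 + b, snd L1 + a)"
  shows "(fst L1 - 0, snd L1 - 0) =
           ((int (u (2 * i + 1)) - 1) * cf_q u (2 * int i) + cf_q u (2 * int i - 1) + 1,
            (int (u (2 * i + 1)) - 1) * cf_p u (2 * int i) + cf_p u (2 * int i - 1) - 1)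
    \<and> (b - fst L1, a - snd L1) = (cf_q u (2 * int i) - 1, cf_p u (2 * int i) + 1)
    \<and> (\<exists>v. freeman_word (standard_line a b 0) (0, 0) L1
               = concat (replicate (u (2 * i + 1) - 1) (cf_E u (2 * int i))) @ v)
    \<and> (\<exists>v. freeman_word (standard_line a b 0) L1 (b, a)
               = v @ concat (replicate (u (2 * i)) (cf_E u (2 * int i - 1))))"
proof -
  define m where "m = 2 * i"
  have idx: "2 * i = m" "2 * int i = int m" "even m" by (simp_all add: m_def)
  define U p q p' q' where "U = u (Suc m)" and "p = cf_pp u (Suc m)" and "q = cf_qq u (Suc m)"
    and "p' = cf_pp u m" and "q' = cf_qq u m"
  have U: "1 \<le> U" using assms(5) by (simp add: U_def m_def)
  have convergent: "a = cf_pp u (Suc (Suc m)) \<and> b = cf_qq u (Suc (Suc m))"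
    using reduced_fraction_eq_convergent[of a b u m] assms(1-4,6) U by (simp add: m_def U_def)
  then have ab: "a = int U * p + p'" "b = int U * q + q'"
    by (simp_all add: U_def p_def q_def p'_def q'_def)
  have det: "a * q - b * p = 1"
    using cf_convergents_det[of u "Suc m"] idx(3) ab by (simp add: U_def p_def q_def p'_def q'_def algebra_simps)
  have "1 \<le> q" unfolding q_def using assms(5) by (intro cf_qq_ge_1) (simp add: m_def)
  moreover have "q \<le> int U * q" using U \<open>1 \<le> q\<close> by (simp add: mult_le_cancel_right1)
  then have "q \<le> b" using ab cf_qq_nonneg[of u m] by (simp add: q'_def)
  ultimately have L1: "L1 = (b - q + 1, a - p - 1)"
    using lower_leaning_point_eq[OF assms(1) det] assms(8-10) by (metis prod.collapse)
  have "is_pattern a b (cf_EE u (Suc (Suc m)))" using is_pattern_cf_EE convergent by metis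
  from freeman_words_at_lower_leaning_point[OF idx(3) assms(4) _ this assms(7)] U L1 ab
  have "prefix (concat (replicate (U - 1) (cf_EE u (Suc m)))) (freeman_word (standard_line a b 0) (0, 0) L1)"
    "suffix (concat (replicate (u m) (cf_EE u m))) (freeman_word (standard_line a b 0) L1 (b, a))"
    by (simp_all add: U_def p_def q_def p'_def q'_def algebra_simps)
  with L1 ab show ?thesis unfolding idx(1,2)
    by (simp add: U_def p_def q_def p'_def q'_def cf_p_of_nat cf_p_of_nat_minus_1 cf_q_of_nat
        cf_q_of_nat_minus_1 cf_E_of_nat cf_E_of_nat_minus_1 prefix_def suffix_def algebra_simps)
qed

end
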